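(* Let $P$ be the $N\times N$ transition matrix of an irreducible aperiodic Markov chain on $\{1,\dots,N\}$, acting on row vectors by $v\mapsto vP$, with stationary distribution $\pi$. Fix a real canonical Jordan basis $(w_i)_{i=1}^N$ with $w_N=\pi$, and define $\lambda_i$, $r_i$, $\Pi_{\mu,r}$ as in the context. Let $\mu_0=\max\{|\lambda_i|: i<N\}$ and $r_0=\max\{r_i: i<N,\ |\lambda_i|=\mu_0\}$, and suppose $\mu_0>0$ and the image of $\Pi_{\mu_0,r_0}$ is one-dimensional. Fix a norm $|\cdot|$ on this image and put $q_i=|\Pi_{\mu_0,r_0}e_i|$, where $e_i$ is the $i$-th coordinate vector. Suppose $\sigma$ is a permutation of $\{1,\dots,N\}$ with $q_{\sigma_1}<\dots<q_{\sigma_N}$. Then for every norm $H$ on $\mathbb{R}^N$ there is $n_0=n_0(H)$ such that for all $n>n_0$, \[ H(e_{\sigma_1}P^n-\pi)<H(e_{\sigma_2}P^n-\pi)<\dots<H(e_{\sigma_N}P^n-\pi). \]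
   Context: Since $P$ is irreducible and aperiodic, $1$ is a simple eigenvalue with positive left eigenvector $\pi$ and all other eigenvalues have modulus $<1$. For $i<N$, $\lambda_i$ is the eigenvalue (chosen with $\operatorname{Im}\lambda_i\ge0$) of the real generalized eigenspace containing $w_i$. If $\lambda_i$ is real, $r_i=\min\{r\in\mathbb{N}: w_i(P-\lambda_iI)^r=0\}$; for nonreal eigenvalues basis vectors come in pairs $(w_i,w_j)$ (real and imaginary parts of a complex generalized eigenvector) and $r_i=r_j$ is the least $r$ with $(w_i+\mathrm{i}w_j)(P-\lambda I)^r=0$. $\Pi_{\mu,r}$ is the linear projection onto the span of $\{w_i:|\lambda_i|=\mu,\ r_i=r\}$ along the span of the other basis vectors. *)

theory Defs
  imports "HOL-Analysis.Analysis"
begin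

definition matpow :: "('a::semiring_1)^'n^'n \<Rightarrow> nat \<Rightarrow> 'a^'n^'n" where
  "matpow A n = ((\<lambda>B. B ** A) ^^ n) (mat 1)"

definition stochastic :: "real^'n^'n \<Rightarrow> bool" where
  "stochastic P \<longleftrightarrow> (\<forall>i j. 0 \<le> P $ i $ j) \<and> (\<forall>i. (\<Sum>j\<in>UNIV. P $ i $ j) = 1)"

definition irreducible_mc :: "real^'n^'n \<Rightarrow> bool" where
  "irreducible_mc P \<longleftrightarrow> (\<forall>i j. \<exists>n>0. 0 < matpow P n $ i $ j)"

definition period_mc :: "real^'n^'n \<Rightarrow> 'n \<Rightarrow> nat" where
  "period_mc P i = Gcd {n. 0 < n \<and> 0 < matpow P n $ i $ i}"

definition aperiodic_mc :: "real^'n^'n \<Rightarrow> bool" where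
  "aperiodic_mc P \<longleftrightarrow> (\<forall>i. period_mc P i = 1)"

definition stationary_dist :: "real^'n^'n \<Rightarrow> real^'n \<Rightarrow> bool" where
  "stationary_dist P \<pi> \<longleftrightarrow> \<pi> v* P = \<pi> \<and> (\<forall>i. 0 \<le> \<pi> $ i) \<and> (\<Sum>i\<in>UNIV. \<pi> $ i) = 1"

definition cvec :: "real^'n \<Rightarrow> complex^'n" where
  "cvec v = (\<chi> i. complex_of_real (v $ i))"

definition cmat :: "real^'n^'n \<Rightarrow> complex^'n^'n" where
  "cmat P = (\<chi> i j. complex_of_real (P $ i $ j))"

text \<open>A Jordan block is given by its eigenvalue l (with Im l \<ge> 0) and its length m.
  A real eigenvalue block occupies m consecutive basis indices, a nonreal one
  occupies 2m indices (consecutive pairs = real and imaginary parts).\<close>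

definition blk_size :: "complex \<times> nat \<Rightarrow> nat" where
  "blk_size b = (if Im (fst b) = 0 then snd b else 2 * snd b)"

definition blk_start :: "(complex \<times> nat) list \<Rightarrow> nat \<Rightarrow> nat" where
  "blk_start bs k = 1 + sum_list (map blk_size (take k bs))"

definition chain_vec :: "(nat \<Rightarrow> real^'n) \<Rightarrow> (complex \<times> nat) list \<Rightarrow> nat \<Rightarrow> nat \<Rightarrow> complex^'n" where
  "chain_vec w bs k t =
     (let s = blk_start bs k in
      if Im (fst (bs ! k)) = 0 then cvec (w (s + t))
      else cvec (w (s + 2 * t)) + \<i> *s cvec (w (s + 2 * t + 1)))"

definition real_jordan_basis ::
  "real^'n^'n \<Rightarrow> (nat \<Rightarrow> real^'n) \<Rightarrow> (complex \<times> nat) list \<Rightarrow> bool" where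
  "real_jordan_basis P w bs \<longleftrightarrow>
     inj_on w {1..CARD('n)} \<and> independent (w ` {1..CARD('n)}) \<and>
     span (w ` {1..CARD('n)}) = UNIV \<and>
     sum_list (map blk_size bs) = CARD('n) \<and>
     (\<forall>k<length bs. 0 < snd (bs ! k) \<and> 0 \<le> Im (fst (bs ! k)) \<and>
        (\<forall>t<snd (bs ! k).
           chain_vec w bs k t v* cmat P =
             fst (bs ! k) *s chain_vec w bs k t
             + (if t = 0 then 0 else chain_vec w bs k (t - 1))))"

definition blk_of :: "(complex \<times> nat) list \<Rightarrow> nat \<Rightarrow> nat" where
  "blk_of bs i = (THE k. k < length bs \<and> blk_start bs k \<le> i \<and> i < blk_start bs (Suc k))"

definition jlam :: "(complex \<times> nat) list \<Rightarrow> nat \<Rightarrow> complex" where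
  "jlam bs i = fst (bs ! blk_of bs i)"

text \<open>the complex generalized eigenvector associated with w_i: w_i itself if lambda_i is
  real, and w_i + i w_j (resp. w_j + i w_i) for the pair (w_i, w_j) otherwise\<close>
definition jvec :: "(nat \<Rightarrow> real^'n) \<Rightarrow> (complex \<times> nat) list \<Rightarrow> nat \<Rightarrow> complex^'n" where
  "jvec w bs i =
     (let k = blk_of bs i; s = blk_start bs k in
      if Im (fst (bs ! k)) = 0 then cvec (w i)
      else chain_vec w bs k ((i - s) div 2))"

definition jrank :: "real^'n^'n \<Rightarrow> (nat \<Rightarrow> real^'n) \<Rightarrow> (complex \<times> nat) list \<Rightarrow> nat \<Rightarrow> nat" where
  "jrank P w bs i = (LEAST r. jvec w bs i v* matpow (cmat P - mat (jlam bs i)) r = 0)"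

definition bcoord :: "(nat \<Rightarrow> real^'n) \<Rightarrow> real^'n \<Rightarrow> nat \<Rightarrow> real" where
  "bcoord w v = (THE c. (\<forall>i. i \<notin> {1..CARD('n)} \<longrightarrow> c i = 0) \<and>
                        v = (\<Sum>i\<in>{1..CARD('n)}. c i *\<^sub>R w i))"

definition bproj :: "(nat \<Rightarrow> real^'n) \<Rightarrow> nat set \<Rightarrow> real^'n \<Rightarrow> real^'n" where
  "bproj w S v = (\<Sum>i\<in>S \<inter> {1..CARD('n)}. bcoord w v i *\<^sub>R w i)"

definition Pi_proj :: "real^'n^'n \<Rightarrow> (nat \<Rightarrow> real^'n) \<Rightarrow> (complex \<times> nat) list
                       \<Rightarrow> real \<Rightarrow> nat \<Rightarrow> real^'n \<Rightarrow> real^'n" where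
  "Pi_proj P w bs \<mu> r = bproj w {i \<in> {1..CARD('n)}. cmod (jlam bs i) = \<mu> \<and> jrank P w bs i = r}"

definition norm_on :: "(real^'n) set \<Rightarrow> (real^'n \<Rightarrow> real) \<Rightarrow> bool" where
  "norm_on V f \<longleftrightarrow>
     (\<forall>x\<in>V. 0 \<le> f x \<and> (f x = 0 \<longleftrightarrow> x = 0)) \<and>
     (\<forall>x\<in>V. \<forall>a. f (a *\<^sub>R x) = \<bar>a\<bar> * f x) \<and>
     (\<forall>x\<in>V. \<forall>y\<in>V. f (x + y) \<le> f x + f y)"

end

theory Submission
  imports Defs "HOL-Real_Asymp.Real_Asymp"
begin

text \<open>Expand a starting vector in the real Jordan basis, \<open>x = \<Sum>\<^sub>i c\<^sub>i w\<^sub>i\<close>. Along a Jordan chain the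
  binomial expansion of \<open>P = (P - \<lambda>) + \<lambda>\<close> shows that \<open>w\<^sub>i P\<^sup>n\<close> grows like \<open>n\<^bsup>r\<^sub>i - 1\<^esup> |\<lambda>\<^sub>i|\<^sup>n\<close>,
  while \<open>w\<^sub>N = \<pi>\<close> is fixed. The rank-one hypothesis singles out one index \<open>m\<close> with \<open>|\<lambda>\<^sub>m| = \<mu>\<^sub>0\<close> and
  \<open>r\<^sub>m = r\<^sub>0\<close>; its eigenvalue is real, since a nonreal one comes with a partner index. Hence
  \<open>x P\<^sup>n - \<pi> = c\<^sub>m binom(n, r\<^sub>0 - 1) \<lambda>\<^sub>m\<^bsup>n - r\<^sub>0 + 1\<^esup> v + o(n\<^bsup>r\<^sub>0 - 1\<^esup> \<mu>\<^sub>0\<^sup>n)\<close> with \<open>v = w\<^sub>m (P - \<lambda>\<^sub>m)\<^bsup>r\<^sub>0 - 1\<^esup> \<noteq> 0\<close>,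
  so every norm \<open>H\<close> of the distance is asymptotic to \<open>|c\<^sub>m| H(v)\<close> times the common growth, whereas
  \<open>q\<^sub>j = |c\<^sub>m| |w\<^sub>m|\<close> for \<open>x = e\<^sub>j\<close>. Irreducibility and aperiodicity are not used: if another index
  has eigenvalue \<open>1\<close>, then \<open>\<mu>\<^sub>0 \<ge> 1\<close> and the component along \<open>\<pi>\<close> is negligible anyway.\<close>

section \<open>Matrix powers acting on row vectors\<close>

lemma matpow_0 [simp]: "matpow A 0 = mat 1"
  by (simp add: matpow_def)

lemma matpow_Suc: "matpow A (Suc n) = matpow A n ** A"
  by (simp add: matpow_def)

lemma matpow_add: "matpow A (a + b) = matpow A a ** matpow A b"
  by (induction b) (simp_all add: matpow_Suc matrix_mul_assoc)

lemma matpow_Suc_left: "matpow A (Suc n) = A ** matpow A n"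
  using matpow_add[of A 1 n] by (simp add: matpow_Suc)

lemma vector_matrix_mult_diff_right: "(x::'a::comm_ring_1^'n) v* (A - B) = x v* A - x v* B"
  by (simp add: vector_matrix_mult_def vec_eq_iff algebra_simps sum_subtractf)

lemma vector_matrix_mult_add_right: "(x::'a::comm_ring_1^'n) v* (A + B) = x v* A + x v* B"
  by (simp add: vector_matrix_mult_def vec_eq_iff algebra_simps sum.distrib)

lemma vector_matrix_mult_add_left: "((x::'a::comm_ring_1^'n) + y) v* A = x v* A + y v* A"
  by (simp add: vector_matrix_mult_def vec_eq_iff algebra_simps sum.distrib)

lemma vector_matrix_mult_scale_left: "(c *s (x::'a::comm_ring_1^'n)) v* A = c *s (x v* A)"
  by (simp add: vector_matrix_mult_def vec_eq_iff algebra_simps sum_distrib_left)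

lemma vector_matrix_mult_scaleR_left: "(c *\<^sub>R (x::real^'n)) v* A = c *\<^sub>R (x v* A)"
  using vector_matrix_mult_scale_left[of c x A] by (simp add: scalar_mult_eq_scaleR)

lemma vector_matrix_mult_sum_left: "(\<Sum>i\<in>S. f i :: 'a::comm_ring_1^'n) v* A = (\<Sum>i\<in>S. f i v* A)"
  by (induction S rule: infinite_finite_induct) (simp_all add: vector_matrix_mult_add_left)

lemma vector_matrix_mult_mat: "(x::'a::comm_ring_1^'n) v* mat c = c *s x"
proof -
  have "(\<Sum>i\<in>UNIV. x $ i * (if i = j then c else 0)) = c * x $ j" for j
  proof -
    have "(\<Sum>i\<in>UNIV. x $ i * (if i = j then c else 0)) = (\<Sum>i\<in>UNIV. if i = j then c * x $ i else 0)"
      by (intro sum.cong) auto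
    then show ?thesis by simp
  qed
  then show ?thesis by (simp add: vector_matrix_mult_def vec_eq_iff mat_def)
qed

lemma vector_matrix_mult_matpow_fixed: "x v* A = x \<Longrightarrow> x v* matpow A n = x"
  by (induction n) (simp_all add: matpow_Suc vector_matrix_mul_assoc[symmetric])

lemma binomial_power_step:
  fixes l :: "'a::comm_ring_1"
  shows "of_nat (Suc n choose k) * l^(Suc n - k) =
         l * (of_nat (n choose k) * l^(n-k)) + (if k = 0 then 0 else of_nat (n choose (k-1)) * l^(n-(k-1)))"
proof (cases k)
  case 0 then show ?thesis by simp
next
  case (Suc j)
  show ?thesis
  proof (cases "j < n")
    case True
    then have "l * l^(n - Suc j) = l^(n-j)"
      by (metis Suc_diff_Suc power_Suc)
    then have "of_nat (n choose Suc j) * l ^ (n - j) = l * (of_nat (n choose Suc j) * l ^ (n - Suc j))"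
      by (metis mult.left_commute)
    then show ?thesis using Suc by (simp add: algebra_simps)
  next
    case False
    then show ?thesis using Suc by (simp add: binomial_eq_0)
  qed
qed

text \<open>The binomial theorem for \<open>A = (A - l I) + l I\<close>, truncated at the nilpotency index of \<open>x\<close>.\<close>

lemma vector_matrix_mult_matpow_binomial:
  fixes x :: "'a::comm_ring_1^'n" and A :: "'a^'n^'n"
  assumes nil: "x v* matpow (A - mat l) r = 0"
  shows "x v* matpow A n = (\<Sum>k<r. (of_nat (n choose k) * l^(n-k)) *s (x v* matpow (A - mat l) k))"
proof (induction n)
  case 0
  show ?case
  proof (cases r)
    case 0 then show ?thesis using nil by simp
  next
    case (Suc r')
    have "(\<Sum>k<r. (of_nat (0 choose k) * l^(0-k)) *s (x v* matpow (A - mat l) k))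
        = (\<Sum>k<r. if k = 0 then x else 0)"
      by (intro sum.cong) (auto simp: vec_eq_iff binomial_eq_0)
    also have "\<dots> = x" using Suc by simp
    finally show ?thesis by simp
  qed
next
  case (Suc n)
  define v where "v k = x v* matpow (A - mat l) k" for k
  define a where "a n k = (of_nat (n choose k) * l^(n-k) :: 'a)" for n k
  have v_step: "v k v* A = v (Suc k) + l *s v k" for k
  proof -
    have "v k v* A = v k v* (A - mat l) + v k v* mat l"
      by (metis diff_add_cancel vector_matrix_mult_add_right)
    then show ?thesis by (simp add: v_def vector_matrix_mult_mat vector_matrix_mul_assoc matpow_Suc)
  qed
  have "x v* matpow A (Suc n) = (\<Sum>k<r. a n k *s v k) v* A"
    using Suc by (simp add: matpow_Suc vector_matrix_mul_assoc[symmetric] a_def v_def)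
  also have "\<dots> = (\<Sum>k<r. a n k *s v (Suc k)) + (\<Sum>k<r. (l * a n k) *s v k)"
    by (simp add: vector_matrix_mult_sum_left vector_matrix_mult_scale_left v_step
        sum.distrib scalar_mult_eq_scaleR algebra_simps vec_eq_iff)
  also have "(\<Sum>k<r. a n k *s v (Suc k)) = (\<Sum>k<r. (if k = 0 then 0 else a n (k-1)) *s v k)"
  proof -
    define g where "g k = (if k = 0 then 0 else a n (k-1)) *s v k" for k
    have "(\<Sum>k<Suc r. g k) = g 0 + (\<Sum>k<r. g (Suc k))" by (rule sum.lessThan_Suc_shift)
    moreover have "(\<Sum>k<Suc r. g k) = (\<Sum>k<r. g k)" using nil by (simp add: g_def v_def)
    ultimately show ?thesis by (simp add: g_def)
  qed
  also have "(\<Sum>k<r. (if k = 0 then 0 else a n (k-1)) *s v k) + (\<Sum>k<r. (l * a n k) *s v k)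
      = (\<Sum>k<r. a (Suc n) k *s v k)"
    unfolding sum.distrib[symmetric]
    by (intro sum.cong refl) (simp add: a_def binomial_power_step[of n] vec_eq_iff algebra_simps)
  finally show ?case by (simp add: a_def v_def)
qed

lemma cvec_vector_matrix_mult: "cvec x v* cmat M = cvec (x v* M)"
  by (simp add: cvec_def cmat_def vector_matrix_mult_def vec_eq_iff)

lemma cmat_matrix_mult: "cmat A ** cmat B = cmat (A ** B)"
  by (simp add: cmat_def matrix_matrix_mult_def vec_eq_iff)

lemma cmat_mat: "cmat (mat c) = mat (of_real c)"
  by (simp add: cmat_def mat_def vec_eq_iff)

lemma cmat_diff: "cmat (A - B) = cmat A - cmat B"
  by (simp add: cmat_def vec_eq_iff)

lemma cmat_matpow: "matpow (cmat M) n = cmat (matpow M n)"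
  by (induction n) (simp_all add: matpow_Suc cmat_matrix_mult cmat_mat)

lemma cvec_eq_0_iff: "cvec x = 0 \<longleftrightarrow> x = 0"
  by (simp add: cvec_def vec_eq_iff)

lemma norm_vector_scale: "norm (c *s (x::'a::real_normed_field^'n)) = norm c * norm x"
  unfolding norm_vec_def by (simp add: norm_mult L2_set_right_distrib)

lemma norm_vector_matrix_mult_part_le:
  fixes x :: "real^'n" and u :: "complex^'n"
  assumes "(\<forall>j. x $ j = Re (u $ j)) \<or> (\<forall>j. x $ j = Im (u $ j))"
  shows "norm (x v* M) \<le> norm (u v* cmat M)"
proof -
  have "(\<forall>j. (x v* M) $ j = Re ((u v* cmat M) $ j)) \<or> (\<forall>j. (x v* M) $ j = Im ((u v* cmat M) $ j))"
    using assms by (auto simp: vector_matrix_mult_def cmat_def)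
  then have "norm ((x v* M) $ j) \<le> norm ((u v* cmat M) $ j)" for j
    using abs_Re_le_cmod abs_Im_le_cmod by (metis real_norm_def)
  then show ?thesis unfolding norm_vec_def by (intro L2_set_mono) auto
qed

lemma sum_vector_matrix_mult_stochastic:
  fixes u :: "complex^'n"
  assumes "stochastic P"
  shows "(\<Sum>j\<in>UNIV. (u v* cmat P) $ j) = (\<Sum>j\<in>UNIV. u $ j)"
proof -
  have "(\<Sum>j\<in>UNIV. (u v* cmat P) $ j) = (\<Sum>i\<in>UNIV. u $ i * (\<Sum>j\<in>UNIV. of_real (P $ i $ j)))"
    unfolding vector_matrix_mult_def cmat_def
    by (simp add: sum_distrib_left) (rule sum.swap[THEN trans], simp add: mult.commute)
  also have "\<dots> = (\<Sum>i\<in>UNIV. u $ i)"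
    using assms unfolding stochastic_def by (metis (no_types, lifting) mult.right_neutral of_real_1 of_real_sum sum.cong)
  finally show ?thesis .
qed

text \<open>Row sums are preserved by \<open>P\<close> and scaled by \<open>1 - l\<close> under \<open>P - l I\<close>.\<close>

lemma sum_generalized_eigenvector_stochastic:
  fixes u :: "complex^'n"
  assumes P: "stochastic P" and nil: "u v* matpow (cmat P - mat l) r = 0" and l: "l \<noteq> 1"
  shows "(\<Sum>j\<in>UNIV. u $ j) = 0"
proof -
  have step: "(\<Sum>j\<in>UNIV. (v v* (cmat P - mat l)) $ j) = (1 - l) * (\<Sum>j\<in>UNIV. v $ j)" for v
    using sum_vector_matrix_mult_stochastic[OF P, of v]
    by (simp add: vector_matrix_mult_diff_right vector_matrix_mult_mat algebra_simps sum_subtractf sum_distrib_left)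
  have "(\<Sum>j\<in>UNIV. (u v* matpow (cmat P - mat l) n) $ j) = (1 - l)^n * (\<Sum>j\<in>UNIV. u $ j)" for n
    by (induction n) (simp_all add: matpow_Suc vector_matrix_mul_assoc[symmetric] step)
  from this[of r] nil l show ?thesis by simp
qed

section \<open>Coordinates in a real Jordan basis\<close>

context
  fixes P :: "real^'n^'n" and w :: "nat \<Rightarrow> real^'n" and bs
  assumes rjb: "real_jordan_basis P w bs"
begin

lemma real_jordan_basis_coeff_zero:
  assumes T: "T \<subseteq> {1..CARD('n)}" and zero: "(\<Sum>i\<in>T. c i *\<^sub>R w i) = 0" and i: "i \<in> T"
  shows "c i = 0"
proof (rule ccontr)
  assume ci: "c i \<noteq> 0"
  have inj: "inj_on w T" using rjb T unfolding real_jordan_basis_def by (auto intro: inj_on_subset)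
  have ind: "independent (w ` T)" using rjb T unfolding real_jordan_basis_def
    by (metis independent_mono image_mono)
  have fin: "finite (w ` T)" using T by (auto intro: finite_subset)
  define u where "u v = c (inv_into T w v)" for v
  have "(\<Sum>v\<in>w ` T. u v *\<^sub>R v) = (\<Sum>i\<in>T. c i *\<^sub>R w i)"
    by (simp add: sum.reindex[OF inj] u_def inv_into_f_f[OF inj])
  moreover have "u (w i) \<noteq> 0" using ci i by (simp add: u_def inv_into_f_f[OF inj])
  ultimately have "dependent (w ` T)"
    using zero i fin by (auto simp: dependent_finite)
  then show False using ind by simp
qed

lemma real_jordan_basis_nonzero: "i \<in> {1..CARD('n)} \<Longrightarrow> w i \<noteq> 0"
  using rjb unfolding real_jordan_basis_def by (metis dependent_zero imageI)

lemma bcoord_eqI: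
  assumes "\<forall>i. i \<notin> {1..CARD('n)} \<longrightarrow> c i = 0" and "v = (\<Sum>i\<in>{1..CARD('n)}. c i *\<^sub>R w i)"
  shows "bcoord w v = c"
  unfolding bcoord_def
proof (rule the_equality)
  fix d assume d: "(\<forall>i. i \<notin> {1..CARD('n)} \<longrightarrow> d i = 0) \<and> v = (\<Sum>i\<in>{1..CARD('n)}. d i *\<^sub>R w i)"
  have "(\<Sum>i\<in>{1..CARD('n)}. (d i - c i) *\<^sub>R w i) = 0"
    using d assms by (simp add: scaleR_diff_left sum_subtractf)
  then have "d i - c i = 0" if "i \<in> {1..CARD('n)}" for i
    using real_jordan_basis_coeff_zero[OF order_refl, of "\<lambda>i. d i - c i"] that by blast
  then show "d = c" using d assms by (metis eq_iff_diff_eq_0 ext)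
qed (use assms in blast)

lemma bcoord_expansion: "v = (\<Sum>i\<in>{1..CARD('n)}. bcoord w v i *\<^sub>R w i)"
proof -
  let ?I = "{1..CARD('n)}"
  have inj: "inj_on w ?I" using rjb unfolding real_jordan_basis_def by auto
  have "v \<in> span (w ` ?I)" using rjb unfolding real_jordan_basis_def by auto
  then obtain u where "v = (\<Sum>x\<in>w ` ?I. u x *\<^sub>R x)"
    using span_finite[of "w ` ?I"] by auto
  then have v: "v = (\<Sum>i\<in>?I. (if i \<in> ?I then u (w i) else 0) *\<^sub>R w i)"
    using sum.reindex[OF inj, unfolded comp_def] by simp
  have "bcoord w v = (\<lambda>i. if i \<in> ?I then u (w i) else 0)"
    by (rule bcoord_eqI) (use v in auto)
  then show ?thesis using v by simp
qed

lemma bcoord_basis_vector: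
  assumes m: "m \<in> {1..CARD('n)}"
  shows "bcoord w (w m) = (\<lambda>i. if i = m then 1 else 0)"
proof (rule bcoord_eqI)
  have "(\<Sum>i\<in>{1..CARD('n)}. (if i = m then 1 else 0) *\<^sub>R w i) = (\<Sum>i\<in>{1..CARD('n)}. if i = m then w i else 0)"
    by (intro sum.cong) auto
  then show "w m = (\<Sum>i\<in>{1..CARD('n)}. (if i = m then 1 else 0) *\<^sub>R w i)" using m by simp
qed (use m in auto)

lemma range_bproj:
  assumes S: "S \<subseteq> {1..CARD('n)}"
  shows "range (bproj w S) = span (w ` S)"
proof
  show "range (bproj w S) \<subseteq> span (w ` S)"
    unfolding bproj_def by (intro image_subsetI span_sum span_scale span_base) auto
next
  show "span (w ` S) \<subseteq> range (bproj w S)"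
  proof
    fix x assume "x \<in> span (w ` S)"
    then obtain u where u: "x = (\<Sum>y\<in>w ` S. u y *\<^sub>R y)"
      using span_finite[of "w ` S"] S by (auto intro: finite_subset)
    have inj: "inj_on w S" using rjb S unfolding real_jordan_basis_def by (auto intro: inj_on_subset)
    define c where "c i = (if i \<in> S then u (w i) else 0)" for i
    have x: "x = (\<Sum>i\<in>S. c i *\<^sub>R w i)" using u by (simp add: sum.reindex[OF inj] c_def)
    have "x = (\<Sum>i\<in>{1..CARD('n)}. c i *\<^sub>R w i)"
      unfolding x c_def using S by (intro sum.mono_neutral_cong_left) auto
    then have "bcoord w x = c" using S by (intro bcoord_eqI) (auto simp: c_def)
    then have "bproj w S x = x" unfolding bproj_def x using S by (simp add: Int_absorb2)
    then show "x \<in> range (bproj w S)" by (metis rangeI)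
  qed
qed

lemma dim_range_bproj:
  assumes S: "S \<subseteq> {1..CARD('n)}"
  shows "dim (range (bproj w S)) = card S"
proof -
  have inj: "inj_on w S" using rjb S unfolding real_jordan_basis_def by (auto intro: inj_on_subset)
  have ind: "independent (w ` S)" using rjb S unfolding real_jordan_basis_def
    by (metis independent_mono image_mono)
  show ?thesis unfolding range_bproj[OF S] dim_span_eq_card_independent[OF ind] card_image[OF inj] ..
qed

end

lemma blk_start_Suc: "k < length bs \<Longrightarrow> blk_start bs (Suc k) = blk_start bs k + blk_size (bs ! k)"
  by (simp add: blk_start_def take_Suc_conv_app_nth)

lemma blk_start_mono: "k \<le> k' \<Longrightarrow> blk_start bs k \<le> blk_start bs k'"
proof (induction k' arbitrary: k)
  case (Suc k')
  have step: "blk_start bs k' \<le> blk_start bs (Suc k')"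
  proof (cases "k' < length bs")
    case False
    then show ?thesis by (simp add: blk_start_def)
  qed (simp add: blk_start_Suc)
  show ?case
  proof (cases "k = Suc k'")
    case False
    then show ?thesis using Suc step by (meson le_SucE order_trans)
  qed simp
qed simp

lemma one_le_blk_start: "1 \<le> blk_start bs k"
  by (simp add: blk_start_def)

lemma blk_start_le_total: "blk_start bs k \<le> 1 + sum_list (map blk_size bs)"
proof -
  have "blk_start bs k \<le> blk_start bs (max k (length bs))" by (rule blk_start_mono) simp
  then show ?thesis by (simp add: blk_start_def)
qed

lemma blk_of_eq:
  assumes k: "k < length bs" and i: "blk_start bs k \<le> i" "i < blk_start bs (Suc k)"
  shows "blk_of bs i = k"
  unfolding blk_of_def
proof (rule the_equality)
  fix k' assume k': "k' < length bs \<and> blk_start bs k' \<le> i \<and> i < blk_start bs (Suc k')"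
  show "k' = k"
  proof (rule ccontr)
    assume "k' \<noteq> k"
    then consider "Suc k' \<le> k" | "Suc k \<le> k'" by linarith
    then show False
    proof cases
      case 1
      then have "blk_start bs (Suc k') \<le> blk_start bs k" by (rule blk_start_mono)
      then show False using k' i by simp
    next
      case 2
      then have "blk_start bs (Suc k) \<le> blk_start bs k'" by (rule blk_start_mono)
      then show False using k' i by simp
    qed
  qed
qed (use k i in simp)

context
  fixes P :: "real^'n^'n" and w :: "nat \<Rightarrow> real^'n" and bs
  assumes rjb: "real_jordan_basis P w bs"
begin

lemma blk_start_le_card: "blk_start bs k \<le> CARD('n) + 1"
  using blk_start_le_total[of bs k] rjb by (simp add: real_jordan_basis_def)

lemma blk_of_bounds:
  assumes i: "i \<in> {1..CARD('n)}"
  shows "blk_of bs i < length bs" "blk_start bs (blk_of bs i) \<le> i" "i < blk_start bs (Suc (blk_of bs i))"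
proof -
  define K where "K = {k. k \<le> length bs \<and> blk_start bs k \<le> i}"
  have finK: "finite K" unfolding K_def by simp
  have "0 \<in> K" using i by (simp add: K_def blk_start_def)
  define k0 where "k0 = Max K"
  have k0K: "k0 \<in> K" unfolding k0_def using finK \<open>0 \<in> K\<close> by (intro Max_in) auto
  have "blk_start bs (length bs) = CARD('n) + 1" using rjb by (simp add: blk_start_def real_jordan_basis_def)
  then have "k0 \<noteq> length bs" using k0K i by (auto simp: K_def)
  then have k0l: "k0 < length bs" using k0K by (simp add: K_def)
  have "i < blk_start bs (Suc k0)"
  proof (rule ccontr)
    assume "\<not> ?thesis"
    then have "Suc k0 \<in> K" using k0l by (simp add: K_def)
    then have "Suc k0 \<le> k0" unfolding k0_def using finK by (intro Max_ge) auto
    then show False by simp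
  qed
  then have "blk_of bs i = k0" using k0l k0K by (intro blk_of_eq) (auto simp: K_def)
  then show "blk_of bs i < length bs" "blk_start bs (blk_of bs i) \<le> i" "i < blk_start bs (Suc (blk_of bs i))"
    using k0l k0K \<open>i < blk_start bs (Suc k0)\<close> by (auto simp: K_def)
qed

lemma blk_start_Suc_eq:
  "k < length bs \<Longrightarrow>
     blk_start bs (Suc k) = blk_start bs k + (if Im (fst (bs!k)) = 0 then snd (bs!k) else 2 * snd (bs!k))"
  using blk_start_Suc by (simp add: blk_size_def)

lemma jvec_chain_vec:
  assumes i: "i \<in> {1..CARD('n)}"
  obtains t where "t < snd (bs ! blk_of bs i)" "jvec w bs i = chain_vec w bs (blk_of bs i) t"
proof -
  define k where "k = blk_of bs i"
  define s where "s = blk_start bs k"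
  have k: "k < length bs" "s \<le> i" "i < blk_start bs (Suc k)"
    using blk_of_bounds[OF i] by (simp_all add: k_def s_def)
  show ?thesis
  proof (cases "Im (fst (bs ! k)) = 0")
    case True
    have "i - s < snd (bs ! k)" using k blk_start_Suc_eq[OF k(1)] True by (simp add: s_def)
    moreover have "jvec w bs i = chain_vec w bs k (i - s)"
      using True k by (simp add: jvec_def chain_vec_def Let_def k_def[symmetric] s_def)
    ultimately show ?thesis using that unfolding k_def by blast
  next
    case False
    have "(i - s) div 2 < snd (bs ! k)" using k blk_start_Suc_eq[OF k(1)] False by (simp add: s_def)
    moreover have "jvec w bs i = chain_vec w bs k ((i - s) div 2)"
      using False k by (simp add: jvec_def Let_def k_def[symmetric] s_def)
    ultimately show ?thesis using that unfolding k_def by blast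
  qed
qed

lemma chain_vec_step:
  assumes k: "k < length bs" and t: "t < snd (bs ! k)"
  shows "chain_vec w bs k t v* (cmat P - mat (fst (bs ! k))) = (if t = 0 then 0 else chain_vec w bs k (t - 1))"
  using rjb k t unfolding real_jordan_basis_def
  by (simp add: vector_matrix_mult_diff_right vector_matrix_mult_mat)

lemma chain_vec_nilpotent:
  assumes k: "k < length bs"
  shows "t < snd (bs ! k) \<Longrightarrow> chain_vec w bs k t v* matpow (cmat P - mat (fst (bs ! k))) (Suc t) = 0"
proof (induction t)
  case 0
  then show ?case using chain_vec_step[OF k, of 0] by (simp add: matpow_Suc)
next
  case (Suc t)
  have "chain_vec w bs k (Suc t) v* matpow (cmat P - mat (fst (bs ! k))) (Suc (Suc t))
     = (chain_vec w bs k (Suc t) v* (cmat P - mat (fst (bs ! k)))) v* matpow (cmat P - mat (fst (bs ! k))) (Suc t)"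
    by (simp only: matpow_Suc_left vector_matrix_mul_assoc)
  then show ?case using chain_vec_step[OF k Suc.prems] Suc by simp
qed

lemma jrank_nilpotent:
  assumes i: "i \<in> {1..CARD('n)}"
  shows "jvec w bs i v* matpow (cmat P - mat (jlam bs i)) (jrank P w bs i) = 0"
proof -
  obtain t where "t < snd (bs ! blk_of bs i)" "jvec w bs i = chain_vec w bs (blk_of bs i) t"
    using jvec_chain_vec[OF i] .
  then have "\<exists>r. jvec w bs i v* matpow (cmat P - mat (jlam bs i)) r = 0"
    using chain_vec_nilpotent[OF blk_of_bounds(1)[OF i]] unfolding jlam_def by metis
  then show ?thesis unfolding jrank_def by (rule LeastI_ex)
qed

lemma jvec_real:
  "Im (jlam bs i) = 0 \<Longrightarrow> jvec w bs i = cvec (w i)"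
  by (simp add: jvec_def jlam_def Let_def)

lemma jvec_part:
  assumes i: "i \<in> {1..CARD('n)}"
  shows "(\<forall>j. w i $ j = Re (jvec w bs i $ j)) \<or> (\<forall>j. w i $ j = Im (jvec w bs i $ j))"
proof (cases "Im (jlam bs i) = 0")
  case True
  then show ?thesis by (simp add: jvec_real cvec_def)
next
  case False
  define s where "s = blk_start bs (blk_of bs i)"
  define t where "t = (i - s) div 2"
  have jv: "jvec w bs i = cvec (w (s + 2 * t)) + \<i> *s cvec (w (s + 2 * t + 1))"
    using False by (simp add: jvec_def chain_vec_def Let_def jlam_def s_def t_def)
  have "s \<le> i" using blk_of_bounds(2)[OF i] by (simp add: s_def)
  then have "i = s + 2 * t \<or> i = s + 2 * t + 1" unfolding t_def by presburger
  then show ?thesis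
  proof
    assume "i = s + 2 * t"
    then show ?thesis unfolding jv by (simp add: cvec_def)
  next
    assume "i = s + 2 * t + 1"
    then show ?thesis unfolding jv by (simp add: cvec_def)
  qed
qed

lemma jvec_nonzero:
  assumes i: "i \<in> {1..CARD('n)}"
  shows "jvec w bs i \<noteq> 0"
proof
  assume "jvec w bs i = 0"
  then have "w i = 0" using jvec_part[OF i] by (auto simp: vec_eq_iff)
  then show False using real_jordan_basis_nonzero[OF rjb i] by simp
qed

lemma jrank_pos: "i \<in> {1..CARD('n)} \<Longrightarrow> 1 \<le> jrank P w bs i"
  using jrank_nilpotent[of i] jvec_nonzero by (cases "jrank P w bs i") auto

lemma jvec_partner:
  assumes i: "i \<in> {1..CARD('n)}" and im: "Im (jlam bs i) \<noteq> 0"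
  obtains i' where "i' \<in> {1..CARD('n)}" "i' \<noteq> i" "jvec w bs i' = jvec w bs i" "jlam bs i' = jlam bs i"
proof -
  define k where "k = blk_of bs i"
  define s where "s = blk_start bs k"
  have k: "k < length bs" "s \<le> i" "i < blk_start bs (Suc k)"
    using blk_of_bounds[OF i] by (simp_all add: k_def s_def)
  have imk: "Im (fst (bs ! k)) \<noteq> 0" using im by (simp add: jlam_def k_def)
  have Sk: "blk_start bs (Suc k) = s + 2 * snd (bs ! k)"
    using blk_start_Suc_eq[OF k(1)] imk by (simp add: s_def)
  define d where "d = i - s"
  have i_eq: "i = s + d" and d_lt: "d < 2 * snd (bs ! k)" using k Sk by (auto simp: d_def)
  define d' where "d' = (if even d then d + 1 else d - 1)"
  have d': "d' < 2 * snd (bs ! k)" "d' \<noteq> d" "d' div 2 = d div 2"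
    using d_lt unfolding d'_def by (auto elim!: evenE oddE)
  have bk: "blk_of bs (s + d') = k" using d' Sk unfolding s_def by (intro blk_of_eq[OF k(1)]) auto
  have "s + d' \<in> {1..CARD('n)}"
    using d' Sk one_le_blk_start[of bs k] blk_start_le_card[of "Suc k"] unfolding s_def by auto
  moreover have "jvec w bs (s + d') = jvec w bs i"
    using bk imk d'(3)
    by (simp add: jvec_def Let_def k_def[symmetric] s_def[symmetric] d_def[symmetric])
  moreover have "jlam bs (s + d') = jlam bs i" using bk by (simp add: jlam_def k_def)
  ultimately show ?thesis using that d'(2) i_eq by simp
qed

lemma sum_basis_vector_eq_0:
  assumes P: "stochastic P" and i: "i \<in> {1..CARD('n)}" and l: "jlam bs i \<noteq> 1"
  shows "(\<Sum>j\<in>UNIV. w i $ j) = 0"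
proof -
  have z: "(\<Sum>j\<in>UNIV. jvec w bs i $ j) = 0"
    by (rule sum_generalized_eigenvector_stochastic[OF P jrank_nilpotent[OF i] l])
  from jvec_part[OF i] show ?thesis
    using arg_cong[OF z, of Re] arg_cong[OF z, of Im] by auto
qed

lemma jrank_real_eigenvalue:
  assumes i: "i \<in> {1..CARD('n)}" and real: "Im (jlam bs i) = 0"
  shows "w i v* matpow (P - mat (Re (jlam bs i))) r = 0 \<longleftrightarrow> jrank P w bs i \<le> r"
proof -
  have "jlam bs i = complex_of_real (Re (jlam bs i))" using real by (simp add: complex_eq_iff)
  then have "cmat P - mat (jlam bs i) = cmat (P - mat (Re (jlam bs i)))"
    by (simp add: cmat_diff cmat_mat)
  then have cpow: "jvec w bs i v* matpow (cmat P - mat (jlam bs i)) r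
      = cvec (w i v* matpow (P - mat (Re (jlam bs i))) r)" for r
    using real by (simp add: jvec_real[OF real] cmat_matpow cvec_vector_matrix_mult)
  show ?thesis
  proof
    assume "w i v* matpow (P - mat (Re (jlam bs i))) r = 0"
    then show "jrank P w bs i \<le> r" unfolding jrank_def by (intro Least_le) (simp add: cpow cvec_eq_0_iff)
  next
    assume "jrank P w bs i \<le> r"
    then obtain d where "r = jrank P w bs i + d" by (metis le_add_diff_inverse)
    then show "w i v* matpow (P - mat (Re (jlam bs i))) r = 0"
      using jrank_nilpotent[OF i]
      by (simp add: matpow_add vector_matrix_mul_assoc[symmetric] cpow cvec_eq_0_iff)
  qed
qed

end

context
  fixes P :: "real^'n^'n" and w :: "nat \<Rightarrow> real^'n" and bs
  assumes rjb: "real_jordan_basis P w bs"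
begin

lemma basis_pair_coeff_zero:
  assumes "a \<in> {1..CARD('n)}" "b \<in> {1..CARD('n)}" "a \<noteq> b" "x *\<^sub>R w a + y *\<^sub>R w b = 0"
  shows "x = 0"
proof -
  have "(\<Sum>i\<in>{a,b}. (if i = a then x else y) *\<^sub>R w i) = 0" using assms by simp
  then show ?thesis
    using real_jordan_basis_coeff_zero[OF rjb, of "{a,b}" "\<lambda>i. if i = a then x else y" a] assms by auto
qed

lemma basis_triple_coeff_zero:
  assumes "a \<in> {1..CARD('n)}" "b \<in> {1..CARD('n)}" "c \<in> {1..CARD('n)}" "a \<noteq> b" "a \<noteq> c" "b \<noteq> c"
    "x *\<^sub>R w a + y *\<^sub>R w b + z *\<^sub>R w c = 0"
  shows "x = 0"
proof -
  have "(\<Sum>i\<in>{a,b,c}. (if i = a then x else if i = b then y else z) *\<^sub>R w i) = 0"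
    using assms by (simp add: algebra_simps)
  then show ?thesis
    using real_jordan_basis_coeff_zero[OF rjb, of "{a,b,c}" "\<lambda>i. if i = a then x else if i = b then y else z" a]
      assms by auto
qed

text \<open>If the last basis vector were the imaginary part of a nonreal chain vector, the imaginary part
  of the chain relation would express \<open>w N = w N P\<close> through \<open>w (N - 1)\<close> (and \<open>w (N - 2)\<close>) with
  coefficient \<open>Im \<lambda> \<noteq> 0\<close>, contradicting independence.\<close>

lemma fixed_last_basis_vector_real_block:
  assumes fixed: "w (CARD('n)) v* P = w (CARD('n))"
  shows "Im (jlam bs (CARD('n))) = 0"
proof (rule ccontr)
  define N where "N = CARD('n)"
  have NI: "N \<in> {1..CARD('n)}" by (simp add: N_def)
  define k where "k = blk_of bs N"
  define s where "s = blk_start bs k"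
  define l where "l = fst (bs ! k)"
  assume "Im (jlam bs (CARD('n))) \<noteq> 0"
  then have iml: "Im l \<noteq> 0" by (simp add: jlam_def k_def l_def N_def)
  have k: "k < length bs" "s \<le> N" "N < blk_start bs (Suc k)"
    using blk_of_bounds[OF rjb NI] by (simp_all add: k_def s_def)
  have s1: "1 \<le> s" using one_le_blk_start[of bs k] by (simp add: s_def)
  have Sk: "blk_start bs (Suc k) = s + 2 * snd (bs ! k)"
    using blk_start_Suc_eq[OF rjb k(1)] iml by (simp add: s_def l_def)
  have le: "s + 2 * snd (bs ! k) \<le> N + 1" using blk_start_le_card[OF rjb, of "Suc k"] Sk by (simp add: N_def)
  define t where "t = (N - s) div 2"
  have tl: "t < snd (bs ! k)" using k Sk unfolding t_def by simp
  have Nst: "N = s + 2 * t + 1" using k tl le unfolding t_def by presburger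
  have cvt: "chain_vec w bs k t = cvec (w (N - 1)) + \<i> *s cvec (w N)"
    using iml Nst by (simp add: chain_vec_def Let_def s_def[symmetric] l_def[symmetric])
  have rel: "chain_vec w bs k t v* cmat P = l *s chain_vec w bs k t + (if t = 0 then 0 else chain_vec w bs k (t - 1))"
    using rjb k(1) tl by (simp add: real_jordan_basis_def l_def)
  have lhs: "chain_vec w bs k t v* cmat P = cvec (w (N - 1) v* P) + \<i> *s cvec (w N)"
    unfolding cvt using fixed
    by (simp add: vector_matrix_mult_add_left vector_matrix_mult_scale_left cvec_vector_matrix_mult N_def)
  have im_rel: "w N $ j = Im l * w (N - 1) $ j + Re l * w N $ j + (if t = 0 then 0 else w (N - 2) $ j)" for j
  proof (cases "t = 0")
    case True
    then show ?thesis using arg_cong[OF rel, of "\<lambda>v. Im (v $ j)"] lhs cvt by (simp add: cvec_def)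
  next
    case False
    have "s + 2 * (t - 1) = N - 3" "s + 2 * (t - 1) + 1 = N - 2" using Nst False by auto
    then have "chain_vec w bs k (t - 1) = cvec (w (N - 3)) + \<i> *s cvec (w (N - 2))"
      using iml by (simp add: chain_vec_def Let_def s_def[symmetric] l_def[symmetric])
    then show ?thesis using arg_cong[OF rel, of "\<lambda>v. Im (v $ j)"] lhs cvt False by (simp add: cvec_def)
  qed
  have N1: "N - 1 \<in> {1..CARD('n)}" "N - 1 \<noteq> N" using Nst s1 by (auto simp: N_def)
  show False
  proof (cases "t = 0")
    case True
    have "(- Im l) *\<^sub>R w (N - 1) + (1 - Re l) *\<^sub>R w N = 0"
      using im_rel True by (simp add: vec_eq_iff algebra_simps)
    from basis_pair_coeff_zero[OF N1(1) NI N1(2) this] show False using iml by simp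
  next
    case False
    have eq: "(- Im l) *\<^sub>R w (N - 1) + (1 - Re l) *\<^sub>R w N + (- 1) *\<^sub>R w (N - 2) = 0"
      using im_rel False by (simp add: vec_eq_iff algebra_simps)
    have N2: "N - 2 \<in> {1..CARD('n)}" "N - 1 \<noteq> N - 2" "N \<noteq> N - 2" using Nst s1 False by (auto simp: N_def)
    from basis_triple_coeff_zero[OF N1(1) NI N2(1) N1(2) N2(2,3) eq] have "- Im l = 0" .
    then show False using iml by simp
  qed
qed

lemma fixed_last_basis_vector_jlam:
  assumes fixed: "w (CARD('n)) v* P = w (CARD('n))"
  shows "jlam bs (CARD('n)) = 1"
proof -
  define N where "N = CARD('n)"
  have NI: "N \<in> {1..CARD('n)}" by (simp add: N_def)
  define k where "k = blk_of bs N"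
  define s where "s = blk_start bs k"
  define l where "l = fst (bs ! k)"
  have real: "Im l = 0"
    using fixed_last_basis_vector_real_block fixed by (simp add: jlam_def k_def l_def N_def)
  have k: "k < length bs" "s \<le> N" "N < blk_start bs (Suc k)"
    using blk_of_bounds[OF rjb NI] by (simp_all add: k_def s_def)
  define t where "t = N - s"
  have tl: "t < snd (bs ! k)" using k blk_start_Suc_eq[OF rjb k(1)] real by (simp add: s_def t_def l_def)
  have rel: "chain_vec w bs k t v* cmat P = l *s chain_vec w bs k t + (if t = 0 then 0 else chain_vec w bs k (t - 1))"
    using rjb k(1) tl by (simp add: real_jordan_basis_def l_def)
  have cvt: "chain_vec w bs k t = cvec (w N)"
    using real k by (simp add: chain_vec_def Let_def s_def[symmetric] l_def[symmetric] t_def)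
  have fixed_c: "cvec (w N) v* cmat P = cvec (w N)" using fixed by (simp add: cvec_vector_matrix_mult N_def)
  have t0: "t = 0"
  proof (rule ccontr)
    assume tn: "t \<noteq> 0"
    have "chain_vec w bs k (t - 1) = cvec (w (N - 1))"
      using real k tn by (simp add: chain_vec_def Let_def s_def[symmetric] l_def[symmetric] t_def)
    then have e: "cvec (w N) = l *s cvec (w N) + cvec (w (N - 1))" using rel tn cvt fixed_c by simp
    have "w N $ j = Re l * w N $ j + w (N - 1) $ j" for j
      using arg_cong[OF e, of "\<lambda>v. Re (v $ j)"] real by (simp add: cvec_def)
    then have eq: "(- 1) *\<^sub>R w (N - 1) + (1 - Re l) *\<^sub>R w N = 0"
      by (simp add: vec_eq_iff algebra_simps)
    have "N - 1 \<in> {1..CARD('n)}" "N - 1 \<noteq> N"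
      using tn one_le_blk_start[of bs k] k by (auto simp: t_def s_def N_def)
    from basis_pair_coeff_zero[OF this(1) NI this(2) eq] show False by simp
  qed
  have e: "cvec (w N) = l *s cvec (w N)" using rel t0 cvt fixed_c by simp
  obtain j where "w N $ j \<noteq> 0" using real_jordan_basis_nonzero[OF rjb NI] by (auto simp: vec_eq_iff)
  moreover have "complex_of_real (w N $ j) = l * complex_of_real (w N $ j)"
    using arg_cong[OF e, of "\<lambda>v. v $ j"] by (simp add: cvec_def)
  ultimately have "l = 1" by simp
  then show ?thesis by (simp add: jlam_def k_def l_def N_def)
qed

lemma fixed_last_basis_vector_jrank:
  assumes fixed: "w (CARD('n)) v* P = w (CARD('n))"
  shows "jrank P w bs (CARD('n)) = 1"
proof -
  have NI: "CARD('n) \<in> {1..CARD('n)}" by simp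
  have "w (CARD('n)) v* matpow (P - mat (Re (jlam bs (CARD('n))))) 1 = 0"
    using fixed fixed_last_basis_vector_jlam[OF fixed]
    by (simp add: matpow_Suc vector_matrix_mult_diff_right vector_matrix_mult_mat)
  then show ?thesis
    using jrank_real_eigenvalue[OF rjb NI] jrank_pos[OF rjb NI] fixed_last_basis_vector_jlam[OF fixed] by simp
qed

end

section \<open>Growth rates\<close>

definition smallo_seq :: "(nat \<Rightarrow> 'a::real_normed_vector) \<Rightarrow> (nat \<Rightarrow> real) \<Rightarrow> bool" where
  "smallo_seq f g \<longleftrightarrow> (\<lambda>n. norm (f n) / g n) \<longlonglongrightarrow> 0"

text \<open>The growth of \<open>J\<^sup>n\<close> for a Jordan block \<open>J\<close> of size \<open>R + 1\<close> with eigenvalue of modulus \<open>\<mu>\<close>.\<close>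

definition jordan_growth :: "real \<Rightarrow> nat \<Rightarrow> nat \<Rightarrow> real" where
  "jordan_growth \<mu> R n = real (n choose R) * \<mu> ^ (n - R)"

lemma jordan_growth_nonneg: "0 \<le> \<mu> \<Longrightarrow> 0 \<le> jordan_growth \<mu> R n"
  by (simp add: jordan_growth_def)

lemma eventually_jordan_growth_pos: "0 < \<mu> \<Longrightarrow> eventually (\<lambda>n. 0 < jordan_growth \<mu> R n) sequentially"
  unfolding eventually_sequentially jordan_growth_def by (intro exI[of _ R]) auto

lemma smallo_seq_norm [simp]: "smallo_seq (\<lambda>n. norm (f n)) g \<longleftrightarrow> smallo_seq f g"
  by (simp add: smallo_seq_def)

lemma smallo_seq_bound:
  assumes g: "\<And>n. 0 \<le> g n" and le: "eventually (\<lambda>n. norm (f n) \<le> b n) sequentially"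
    and b: "smallo_seq b g"
  shows "smallo_seq f g"
  unfolding smallo_seq_def
proof (rule Lim_null_comparison)
  show "eventually (\<lambda>n. norm (norm (f n) / g n) \<le> norm (b n) / g n) sequentially"
    using le by eventually_elim (auto simp: g intro!: divide_right_mono)
  show "(\<lambda>n. norm (b n) / g n) \<longlonglongrightarrow> 0" using b by (simp add: smallo_seq_def)
qed

lemma smallo_seq_add:
  assumes g: "\<And>n. 0 \<le> g n" and "smallo_seq f g" "smallo_seq h g"
  shows "smallo_seq (\<lambda>n. f n + h n) g"
proof (rule smallo_seq_bound[OF g])
  show "smallo_seq (\<lambda>n. norm (f n) + norm (h n)) g"
    using assms(2,3) tendsto_add_zero unfolding smallo_seq_def by (fastforce simp: add_divide_distrib)
qed (simp add: norm_triangle_ineq)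

lemma smallo_seq_scaleR:
  assumes "smallo_seq f g"
  shows "smallo_seq (\<lambda>n. c *\<^sub>R f n) g"
  using tendsto_mult_right_zero[OF assms[unfolded smallo_seq_def], of "\<bar>c\<bar>"]
  by (simp add: smallo_seq_def)

lemma smallo_seq_sum:
  assumes g: "\<And>n. 0 \<le> g n" and "\<And>k. k \<in> K \<Longrightarrow> smallo_seq (f k) g"
  shows "smallo_seq (\<lambda>n. \<Sum>k\<in>K. f k n) g"
  using assms(2)
proof (induction K rule: infinite_finite_induct)
  case (insert k K)
  then have "smallo_seq (f k) g" "smallo_seq (\<lambda>n. \<Sum>k\<in>K. f k n) g" by auto
  then show ?case using insert(1,2) by (simp add: smallo_seq_add[OF g])
qed (simp_all add: smallo_seq_def)

lemma jordan_growth_ratio_lower_degree: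
  fixes \<rho> \<mu> :: real
  assumes \<rho>: "0 \<le> \<rho>" "\<rho> \<le> \<mu>" and \<mu>: "0 < \<mu>" and kR: "k < R"
  shows "(\<lambda>n. jordan_growth \<rho> k n / jordan_growth \<mu> R n) \<longlonglongrightarrow> 0"
proof (rule tendsto_sandwich[OF _ _ tendsto_const])
  define b where "b n = \<mu>^(R-k) * real R ^ R * (real n ^ k / real n ^ R)" for n
  show "b \<longlonglongrightarrow> 0"
    unfolding b_def using kR by (intro tendsto_mult_right_zero) real_asymp
  show "eventually (\<lambda>n. 0 \<le> jordan_growth \<rho> k n / jordan_growth \<mu> R n) sequentially"
    using \<rho> by (simp add: jordan_growth_def)
  have "jordan_growth \<rho> k n / jordan_growth \<mu> R n \<le> b n" if n: "R \<le> n" for n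
  proof -
    have n_pos: "0 < real n" and R_pos: "0 < real R" using n kR by auto
    have "real (n choose k) \<le> real n ^ k"
      using binomial_le_pow[of k n] n kR by (metis less_imp_le_nat of_nat_le_iff of_nat_power order_trans)
    moreover have "(real n / real R) ^ R \<le> real (n choose R)"
      using binomial_ge_n_over_k_pow_k[OF n] by simp
    moreover have "\<rho>^(n-k) \<le> \<mu>^(n-k)" using \<rho> by (simp add: power_mono)
    moreover have "\<mu>^(n-k) = \<mu>^(R-k) * \<mu>^(n-R)" using n kR by (simp flip: power_add)
    moreover have "0 < (real n / real R) ^ R" using n_pos R_pos by simp
    ultimately have "jordan_growth \<rho> k n / jordan_growth \<mu> R n
        \<le> real n ^ k * (\<mu>^(R-k) * \<mu>^(n-R)) / ((real n / real R) ^ R * \<mu>^(n-R))"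
      unfolding jordan_growth_def using \<rho> \<mu> by (intro frac_le mult_mono mult_pos_pos) auto
    also have "\<dots> = b n"
      unfolding b_def using n_pos R_pos \<mu> kR by (simp add: field_simps)
    finally show ?thesis .
  qed
  then show "eventually (\<lambda>n. jordan_growth \<rho> k n / jordan_growth \<mu> R n \<le> b n) sequentially"
    unfolding eventually_sequentially by blast
qed

lemma jordan_growth_ratio_smaller_base:
  fixes \<rho> \<mu> :: real
  assumes \<rho>: "0 < \<rho>" "\<rho> < \<mu>"
  shows "(\<lambda>n. jordan_growth \<rho> k n / jordan_growth \<mu> R n) \<longlonglongrightarrow> 0"
proof (rule tendsto_sandwich[OF _ _ tendsto_const])
  define b where "b n = (\<mu>^R / \<rho>^k) * (real n ^ k * (\<rho>/\<mu>) ^ n)" for n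
  have "(\<lambda>n. real n ^ k * (\<rho>/\<mu>) ^ n) \<longlonglongrightarrow> 0"
    using \<rho> by real_asymp
  then show "b \<longlonglongrightarrow> 0" unfolding b_def by (rule tendsto_mult_right_zero)
  show "eventually (\<lambda>n. 0 \<le> jordan_growth \<rho> k n / jordan_growth \<mu> R n) sequentially"
    using \<rho> by (simp add: jordan_growth_def)
  have "jordan_growth \<rho> k n / jordan_growth \<mu> R n \<le> b n" if n: "k + R \<le> n" for n
  proof -
    have "real (n choose k) \<le> real n ^ k"
      using binomial_le_pow[of k n] n by (metis le_add1 order_trans of_nat_le_iff of_nat_power)
    moreover have "1 \<le> real (n choose R)" using n by (simp add: Suc_leI)
    ultimately have "jordan_growth \<rho> k n / jordan_growth \<mu> R n \<le> real n ^ k * \<rho>^(n-k) / (1 * \<mu>^(n-R))"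
      unfolding jordan_growth_def using \<rho> by (intro frac_le mult_mono mult_pos_pos) auto
    also have "\<dots> = b n"
      unfolding b_def using n \<rho> by (simp add: power_diff field_simps)
    finally show ?thesis .
  qed
  then show "eventually (\<lambda>n. jordan_growth \<rho> k n / jordan_growth \<mu> R n \<le> b n) sequentially"
    unfolding eventually_sequentially by blast
qed

lemma smallo_seq_jordan_growth:
  fixes \<rho> \<mu> :: real
  assumes \<rho>: "0 \<le> \<rho>" "\<rho> \<le> \<mu>" and \<mu>: "0 < \<mu>" and dominated: "\<rho> < \<mu> \<or> k < R"
  shows "smallo_seq (jordan_growth \<rho> k) (jordan_growth \<mu> R)"
proof -
  have "(\<lambda>n. jordan_growth \<rho> k n / jordan_growth \<mu> R n) \<longlonglongrightarrow> 0"
  proof (cases "k < R")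
    case True
    then show ?thesis using jordan_growth_ratio_lower_degree \<rho> \<mu> by blast
  next
    case False
    then have "\<rho> < \<mu>" using dominated by simp
    show ?thesis
    proof (cases "\<rho> = 0")
      case True
      have "eventually (\<lambda>n. jordan_growth \<rho> k n / jordan_growth \<mu> R n = 0) sequentially"
        unfolding eventually_sequentially True jordan_growth_def by (intro exI[of _ "Suc k"]) auto
      then show ?thesis by (rule tendsto_eventually)
    qed (use \<open>\<rho> < \<mu>\<close> \<rho> jordan_growth_ratio_smaller_base in auto)
  qed
  then show ?thesis using \<rho> by (simp add: smallo_seq_def jordan_growth_def)
qed

lemma smallo_seq_binomial_sum:
  fixes v :: "nat \<Rightarrow> 'a::real_normed_field^'n" and l :: 'a
  assumes l: "norm l \<le> \<mu>" and \<mu>: "0 < \<mu>" and dominated: "norm l < \<mu> \<or> (\<forall>k\<in>K. k < R)"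
  shows "smallo_seq (\<lambda>n. \<Sum>k\<in>K. (of_nat (n choose k) * l^(n-k)) *s v k) (jordan_growth \<mu> R)"
proof (rule smallo_seq_sum)
  show g: "0 \<le> jordan_growth \<mu> R n" for n using \<mu> by (simp add: jordan_growth_nonneg)
  fix k assume k: "k \<in> K"
  show "smallo_seq (\<lambda>n. (of_nat (n choose k) * l^(n-k)) *s v k) (jordan_growth \<mu> R)"
  proof (rule smallo_seq_bound[OF g])
    show "eventually (\<lambda>n. norm ((of_nat (n choose k) * l^(n-k)) *s v k) \<le> norm (v k) *\<^sub>R jordan_growth (norm l) k n)
      sequentially"
      by (simp add: norm_vector_scale norm_mult norm_power jordan_growth_def)
    show "smallo_seq (\<lambda>n. norm (v k) *\<^sub>R jordan_growth (norm l) k n) (jordan_growth \<mu> R)"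
      using dominated k l \<mu> by (intro smallo_seq_scaleR smallo_seq_jordan_growth) auto
  qed
qed

lemma smallo_seq_generalized_eigenvector_power:
  fixes u :: "'a::real_normed_field^'n"
  assumes nil: "u v* matpow (A - mat l) r = 0"
    and l: "norm l \<le> \<mu>" and \<mu>: "0 < \<mu>" and dominated: "norm l < \<mu> \<or> r \<le> R"
  shows "smallo_seq (\<lambda>n. u v* matpow A n) (jordan_growth \<mu> R)"
  unfolding vector_matrix_mult_matpow_binomial[OF nil]
  using dominated by (intro smallo_seq_binomial_sum[OF l \<mu>]) auto

lemma smallo_seq_leading_term:
  fixes x :: "'a::real_normed_field^'n"
  assumes nil: "x v* matpow (A - mat l) (Suc R) = 0" and l: "l \<noteq> 0"
  shows "smallo_seq
    (\<lambda>n. x v* matpow A n - (of_nat (n choose R) * l^(n-R)) *s (x v* matpow (A - mat l) R))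
    (jordan_growth (norm l) R)"
  unfolding vector_matrix_mult_matpow_binomial[OF nil] sum.lessThan_Suc add_diff_cancel_right'
  using l by (intro smallo_seq_binomial_sum) auto

lemma smallo_seq_basis_vector_power:
  fixes P :: "real^'n^'n"
  assumes rjb: "real_jordan_basis P w bs" and i: "i \<in> {1..CARD('n)}"
    and l: "cmod (jlam bs i) \<le> \<mu>" and \<mu>: "0 < \<mu>"
    and dominated: "cmod (jlam bs i) < \<mu> \<or> jrank P w bs i \<le> R"
  shows "smallo_seq (\<lambda>n. w i v* matpow P n) (jordan_growth \<mu> R)"
proof (rule smallo_seq_bound)
  show "0 \<le> jordan_growth \<mu> R n" for n using \<mu> by (simp add: jordan_growth_nonneg)
  show "eventually (\<lambda>n. norm (w i v* matpow P n) \<le> norm (jvec w bs i v* matpow (cmat P) n)) sequentially"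
    using norm_vector_matrix_mult_part_le[OF jvec_part[OF rjb i]] by (simp add: cmat_matpow)
  show "smallo_seq (\<lambda>n. norm (jvec w bs i v* matpow (cmat P) n)) (jordan_growth \<mu> R)"
    using smallo_seq_generalized_eigenvector_power[OF jrank_nilpotent[OF rjb i] l \<mu> dominated] by simp
qed

lemma norm_on_sum_le:
  assumes H: "norm_on UNIV H"
  shows "H (\<Sum>i\<in>A. f i) \<le> (\<Sum>i\<in>A. H (f i))"
proof -
  have H0: "H 0 = 0" using H unfolding norm_on_def by blast
  show ?thesis
  proof (induction A rule: infinite_finite_induct)
    case (insert x F)
    have "H (f x + sum f F) \<le> H (f x) + H (sum f F)" using H unfolding norm_on_def by blast
    then show ?case using insert by simp
  qed (simp_all add: H0)
qed

lemma norm_on_lipschitz: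
  assumes H: "norm_on UNIV H"
  obtains K where "\<And>x y. \<bar>H x - H y\<bar> \<le> K * norm (x - y :: real^'n)"
proof -
  define K where "K = (\<Sum>j\<in>UNIV. H (axis j (1::real)))"
  have Hn: "0 \<le> H x" and Hs: "H (a *\<^sub>R x) = \<bar>a\<bar> * H x" and Ht: "H (x + y) \<le> H x + H y" for a x y
    using H unfolding norm_on_def by blast+
  have bound: "H x \<le> K * norm x" for x :: "real^'n"
  proof -
    have "H x = H (\<Sum>j\<in>UNIV. x $ j *\<^sub>R axis j 1)"
      using basis_expansion[of x] by (simp add: scalar_mult_eq_scaleR)
    also have "\<dots> \<le> (\<Sum>j\<in>UNIV. H (x $ j *\<^sub>R axis j 1))" by (rule norm_on_sum_le[OF H])
    also have "\<dots> = (\<Sum>j\<in>UNIV. \<bar>x $ j\<bar> * H (axis j 1))" by (simp add: Hs)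
    also have "\<dots> \<le> (\<Sum>j\<in>UNIV. norm x * H (axis j 1))"
      by (intro sum_mono mult_right_mono component_le_norm_cart Hn)
    also have "\<dots> = K * norm x" by (simp add: K_def sum_distrib_left mult.commute)
    finally show ?thesis .
  qed
  have "\<bar>H x - H y\<bar> \<le> K * norm (x - y)" for x y
  proof -
    have "H (y - x) = H (x - y)" using Hs[of "-1" "x - y"] by simp
    then show ?thesis using Ht[of y "x - y"] Ht[of x "y - x"] bound[of "x - y"] by simp
  qed
  then show ?thesis using that by blast
qed

lemma norm_on_scaled_tendsto:
  fixes v :: "real^'n"
  assumes H: "norm_on UNIV H" and g: "eventually (\<lambda>n. 0 < g n) sequentially"
    and a: "\<And>n. \<bar>a n\<bar> = c * g n" and small: "smallo_seq (\<lambda>n. x n - a n *\<^sub>R v) g"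
  shows "(\<lambda>n. H (x n) / g n) \<longlonglongrightarrow> c * H v"
proof -
  obtain K where K: "\<And>x y. \<bar>H x - H y\<bar> \<le> K * norm (x - y :: real^'n)"
    using norm_on_lipschitz[OF H] by blast
  have Hs: "H (b *\<^sub>R v) = \<bar>b\<bar> * H v" for b using H unfolding norm_on_def by blast
  have "eventually (\<lambda>n. norm (H (x n) / g n - c * H v) \<le> K * (norm (x n - a n *\<^sub>R v) / g n)) sequentially"
    using g
  proof eventually_elim
    case (elim n)
    have "H (x n) / g n - c * H v = (H (x n) - H (a n *\<^sub>R v)) / g n"
      using elim by (simp add: Hs a field_simps)
    then show ?case using K[of "x n" "a n *\<^sub>R v"] elim by (simp add: divide_right_mono)
  qed
  moreover have "(\<lambda>n. K * (norm (x n - a n *\<^sub>R v) / g n)) \<longlonglongrightarrow> 0"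
    using small unfolding smallo_seq_def by (rule tendsto_mult_right_zero)
  ultimately have "(\<lambda>n. H (x n) / g n - c * H v) \<longlonglongrightarrow> 0" by (rule Lim_null_comparison)
  then show ?thesis by (rule LIM_zero_cancel)
qed

lemma eventually_less_of_scaled_tendsto:
  fixes f g h :: "nat \<Rightarrow> real"
  assumes "(\<lambda>n. f n / g n) \<longlonglongrightarrow> a" "(\<lambda>n. h n / g n) \<longlonglongrightarrow> b" "a < b"
    and g: "eventually (\<lambda>n. 0 < g n) sequentially"
  shows "eventually (\<lambda>n. f n < h n) sequentially"
proof -
  have "(\<lambda>n. h n / g n - f n / g n) \<longlonglongrightarrow> b - a" using assms(1,2) by (rule tendsto_diff[rotated])
  then have "eventually (\<lambda>n. 0 < h n / g n - f n / g n) sequentially"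
    using assms(3) by (intro order_tendstoD(1)) auto
  with g show ?thesis by eventually_elim (simp add: field_simps)
qed

lemma eventually_sorted_of_scaled_tendsto:
  fixes F :: "'a \<Rightarrow> nat \<Rightarrow> real" and \<sigma> :: "nat \<Rightarrow> 'a"
  assumes lim: "\<And>j. (\<lambda>n. F j n / g n) \<longlonglongrightarrow> c * a j" and c: "0 < c"
    and g: "eventually (\<lambda>n. 0 < g n) sequentially"
    and sorted: "\<forall>k\<in>K. a (\<sigma> k) < a (\<sigma> (Suc k))" and K: "finite K"
  shows "\<exists>n0. \<forall>n>n0. \<forall>k\<in>K. F (\<sigma> k) n < F (\<sigma> (Suc k)) n"
proof -
  have "eventually (\<lambda>n. F (\<sigma> k) n < F (\<sigma> (Suc k)) n) sequentially" if "k \<in> K" for k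
    using sorted that c by (intro eventually_less_of_scaled_tendsto[OF lim lim _ g]) simp
  then have "eventually (\<lambda>n. \<forall>k\<in>K. F (\<sigma> k) n < F (\<sigma> (Suc k)) n) sequentially"
    using K by (simp add: eventually_ball_finite_distrib)
  then obtain n0 where "\<forall>n\<ge>n0. \<forall>k\<in>K. F (\<sigma> k) n < F (\<sigma> (Suc k)) n"
    unfolding eventually_sequentially by blast
  then show ?thesis by (intro exI[of _ n0]) simp
qed

lemma norm_on_range_rank_one:
  fixes u :: "real^'n"
  assumes nrm: "norm_on (range f) nrm" and f: "\<And>v. f v = b v *\<^sub>R u" and fu: "f u = u" and u: "u \<noteq> 0"
  shows "0 < nrm u" "nrm (f v) = \<bar>b v\<bar> * nrm u"
proof -
  have "u \<in> range f" using fu by (metis rangeI)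
  then have "0 \<le> nrm u" "nrm u = 0 \<longleftrightarrow> u = 0" "nrm (a *\<^sub>R u) = \<bar>a\<bar> * nrm u" for a
    using nrm unfolding norm_on_def by blast+
  then show "0 < nrm u" "nrm (f v) = \<bar>b v\<bar> * nrm u" using u by (auto simp: f)
qed

section \<open>The dominant term\<close>

context
  fixes P :: "real^'n^'n" and w :: "nat \<Rightarrow> real^'n" and bs
  assumes rjb: "real_jordan_basis P w bs"
begin

lemma bcoord_last_stochastic:
  assumes P: "stochastic P" and wN: "w (CARD('n)) = \<pi>"
    and no_one: "\<And>i. i \<in> {1..<CARD('n)} \<Longrightarrow> jlam bs i \<noteq> 1"
  shows "bcoord w x (CARD('n)) * (\<Sum>j\<in>UNIV. \<pi> $ j) = (\<Sum>j\<in>UNIV. x $ j)"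
proof -
  let ?c = "bcoord w x"
  have "(\<Sum>j\<in>UNIV. x $ j) = (\<Sum>j\<in>UNIV. \<Sum>i\<in>{1..CARD('n)}. ?c i * w i $ j)"
    by (subst bcoord_expansion[OF rjb, of x]) simp
  also have "\<dots> = (\<Sum>i\<in>{1..CARD('n)}. ?c i * (\<Sum>j\<in>UNIV. w i $ j))"
    by (subst sum.swap) (simp add: sum_distrib_left)
  also have "{1..CARD('n)} = insert (CARD('n)) {1..<CARD('n)}"
    using zero_less_card_finite[where 'a='n] by auto
  also have "(\<Sum>i\<in>insert (CARD('n)) {1..<CARD('n)}. ?c i * (\<Sum>j\<in>UNIV. w i $ j))
      = ?c (CARD('n)) * (\<Sum>j\<in>UNIV. \<pi> $ j)"
  proof -
    have "(\<Sum>i\<in>{1..<CARD('n)}. ?c i * (\<Sum>j\<in>UNIV. w i $ j)) = 0"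
      using sum_basis_vector_eq_0[OF rjb P] no_one by (intro sum.neutral) auto
    then show ?thesis using wN by simp
  qed
  finally show ?thesis by (rule sym)
qed

lemma dim_Pi_proj_eq_1:
  assumes "dim (range (Pi_proj P w bs \<mu> r)) = 1"
  obtains m where "m \<in> {1..CARD('n)}" "cmod (jlam bs m) = \<mu>" "jrank P w bs m = r"
    "\<And>i. i \<in> {1..CARD('n)} \<Longrightarrow> cmod (jlam bs i) = \<mu> \<Longrightarrow> jrank P w bs i = r \<Longrightarrow> i = m"
    "\<And>v. Pi_proj P w bs \<mu> r v = bcoord w v m *\<^sub>R w m"
proof -
  define S where "S = {i \<in> {1..CARD('n)}. cmod (jlam bs i) = \<mu> \<and> jrank P w bs i = r}"
  have "dim (range (Pi_proj P w bs \<mu> r)) = card S"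
    unfolding Pi_proj_def S_def by (rule dim_range_bproj[OF rjb]) auto
  with assms have "card S = 1" by simp
  then obtain m where S: "S = {m}" by (rule card_1_singletonE)
  then have m: "m \<in> {1..CARD('n)}" "cmod (jlam bs m) = \<mu>" "jrank P w bs m = r"
    unfolding S_def by blast+
  have "Pi_proj P w bs \<mu> r v = bcoord w v m *\<^sub>R w m" for v
    using m(1) unfolding Pi_proj_def S_def[symmetric] bproj_def S by simp
  moreover have "i = m" if "i \<in> {1..CARD('n)}" "cmod (jlam bs i) = \<mu>" "jrank P w bs i = r" for i
    using that S unfolding S_def by blast
  ultimately show ?thesis using that m by blast
qed

lemma unique_index_real_eigenvalue:
  assumes i: "i \<in> {1..CARD('n)}"
    and unique: "\<And>i'. i' \<in> {1..CARD('n)} \<Longrightarrow> cmod (jlam bs i') = cmod (jlam bs i)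
      \<Longrightarrow> jrank P w bs i' = jrank P w bs i \<Longrightarrow> i' = i"
  shows "Im (jlam bs i) = 0"
proof (rule ccontr)
  assume "Im (jlam bs i) \<noteq> 0"
  then obtain i' where "i' \<in> {1..CARD('n)}" "i' \<noteq> i" "jvec w bs i' = jvec w bs i" "jlam bs i' = jlam bs i"
    using jvec_partner[OF rjb i] by blast
  then show False using unique[of i'] by (simp add: jrank_def)
qed

end

context
  fixes P :: "real^'n^'n" and w :: "nat \<Rightarrow> real^'n" and bs
  assumes rjb: "real_jordan_basis P w bs"
begin

lemma smallo_seq_power_minus_dominant:
  fixes g :: "nat \<Rightarrow> real"
  assumes g: "\<And>n. 0 \<le> g n"
    and fixed: "\<pi> v* P = \<pi>" and wN: "w (CARD('n)) = \<pi>" and m: "m \<in> {1..<CARD('n)}"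
    and others: "\<And>i. i \<in> {1..<CARD('n)} - {m} \<Longrightarrow> smallo_seq (\<lambda>n. w i v* matpow P n) g"
    and lead: "smallo_seq (\<lambda>n. w m v* matpow P n - a n *\<^sub>R v) g"
    and last: "smallo_seq (\<lambda>n. (bcoord w x (CARD('n)) - 1) *\<^sub>R \<pi>) g"
  shows "smallo_seq (\<lambda>n. x v* matpow P n - \<pi> - (bcoord w x m * a n) *\<^sub>R v) g"
proof -
  let ?c = "bcoord w x" and ?N = "CARD('n)"
  define A where "A = {1..<?N} - {m}"
  have split: "{1..?N} = insert ?N (insert m A)" and A: "finite A" "m \<notin> A" "?N \<notin> A" "?N \<noteq> m"
    using m by (auto simp: A_def)
  have "x v* matpow P n = (\<Sum>i\<in>{1..?N}. ?c i *\<^sub>R (w i v* matpow P n))" for n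
    by (subst bcoord_expansion[OF rjb, of x]) (simp add: vector_matrix_mult_sum_left vector_matrix_mult_scaleR_left)
  also have "\<dots> n = ?c ?N *\<^sub>R \<pi> + ?c m *\<^sub>R (w m v* matpow P n) + (\<Sum>i\<in>A. ?c i *\<^sub>R (w i v* matpow P n))" for n
    unfolding split using A by (simp add: wN vector_matrix_mult_matpow_fixed[OF fixed] add.assoc)
  finally have "x v* matpow P n - \<pi> - (?c m * a n) *\<^sub>R v
      = ((?c ?N - 1) *\<^sub>R \<pi> + ?c m *\<^sub>R (w m v* matpow P n - a n *\<^sub>R v)) + (\<Sum>i\<in>A. ?c i *\<^sub>R (w i v* matpow P n))" for n
    by (simp add: algebra_simps)
  moreover have "smallo_seq (\<lambda>n. ((?c ?N - 1) *\<^sub>R \<pi> + ?c m *\<^sub>R (w m v* matpow P n - a n *\<^sub>R v))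
      + (\<Sum>i\<in>A. ?c i *\<^sub>R (w i v* matpow P n))) g"
  proof (intro smallo_seq_add[OF g] last)
    show "smallo_seq (\<lambda>n. ?c m *\<^sub>R (w m v* matpow P n - a n *\<^sub>R v)) g"
      using lead by (rule smallo_seq_scaleR)
    show "smallo_seq (\<lambda>n. \<Sum>i\<in>A. ?c i *\<^sub>R (w i v* matpow P n)) g"
      using others by (intro smallo_seq_sum[OF g] smallo_seq_scaleR) (auto simp: A_def)
  qed
  ultimately show ?thesis by simp
qed

text \<open>The component of a probability vector along \<open>\<pi>\<close> is \<open>1\<close>, unless another basis vector has
  eigenvalue \<open>1\<close>; then \<open>\<mu> \<ge> 1\<close>, and the defect is swamped by the dominant growth.\<close>

lemma smallo_seq_stationary_defect:
  assumes P: "stochastic P" and st: "stationary_dist P \<pi>" and wN: "w (CARD('n)) = \<pi>"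
    and x: "(\<Sum>j\<in>UNIV. x $ j) = 1"
    and below: "\<And>i. i \<in> {1..<CARD('n)} \<Longrightarrow> cmod (jlam bs i) \<le> \<mu>" and \<mu>: "0 < \<mu>"
    and rank: "\<mu> = 1 \<Longrightarrow> 0 < R"
  shows "smallo_seq (\<lambda>n. (bcoord w x (CARD('n)) - 1) *\<^sub>R \<pi>) (jordan_growth \<mu> R)"
proof (cases "\<exists>i\<in>{1..<CARD('n)}. jlam bs i = 1")
  case True
  then have "1 \<le> \<mu>" using below by fastforce
  have fixed: "\<pi> v* P = \<pi>" using st by (simp add: stationary_dist_def)
  have fixedN: "w (CARD('n)) v* P = w (CARD('n))" using fixed wN by simp
  have "1 < \<mu> \<or> 1 \<le> R" using \<open>1 \<le> \<mu>\<close> rank by (cases "\<mu> = 1") auto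
  then have "smallo_seq (\<lambda>n. w (CARD('n)) v* matpow P n) (jordan_growth \<mu> R)"
    using fixed_last_basis_vector_jlam[OF rjb fixedN] fixed_last_basis_vector_jrank[OF rjb fixedN] \<open>1 \<le> \<mu>\<close>
    by (intro smallo_seq_basis_vector_power[OF rjb _ _ \<mu>]) auto
  then show ?thesis
    using smallo_seq_scaleR vector_matrix_mult_matpow_fixed[OF fixed] wN by simp
next
  case False
  then have "bcoord w x (CARD('n)) = 1"
    using bcoord_last_stochastic[OF rjb P wN, of x] x st by (auto simp: stationary_dist_def)
  then show ?thesis by (simp add: smallo_seq_def)
qed

lemma dominant_index:
  assumes st: "stationary_dist P \<pi>" and wN: "w (CARD('n)) = \<pi>" and two: "2 \<le> CARD('n)"
    and \<mu>_def: "\<mu> = Max ((\<lambda>i. cmod (jlam bs i)) ` {1..<CARD('n)})"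
    and r_def: "r = Max (jrank P w bs ` {i \<in> {1..<CARD('n)}. cmod (jlam bs i) = \<mu>})"
    and dim: "dim (range (Pi_proj P w bs \<mu> r)) = 1"
  obtains m R where "m \<in> {1..<CARD('n)}" "Im (jlam bs m) = 0" "cmod (jlam bs m) = \<mu>"
    "jrank P w bs m = Suc R"
    "\<And>i. i \<in> {1..<CARD('n)} \<Longrightarrow> cmod (jlam bs i) \<le> \<mu>"
    "\<And>i. i \<in> {1..CARD('n)} - {m} \<Longrightarrow> cmod (jlam bs i) = \<mu> \<Longrightarrow> jrank P w bs i \<le> R"
    "\<And>v. Pi_proj P w bs \<mu> r v = bcoord w v m *\<^sub>R w m"
proof -
  let ?I = "{1..<CARD('n)}"
  define J where "J = {i \<in> ?I. cmod (jlam bs i) = \<mu>}"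
  have I: "finite ?I" "?I \<noteq> {}" using two by auto
  have below: "cmod (jlam bs i) \<le> \<mu>" if "i \<in> ?I" for i
    unfolding \<mu>_def using I that by (intro Max_ge) auto
  have "\<mu> \<in> (\<lambda>i. cmod (jlam bs i)) ` ?I" unfolding \<mu>_def using I by (intro Max_in) auto
  then have J: "finite J" "J \<noteq> {}" by (auto simp: J_def)
  have r_ge: "jrank P w bs i \<le> r" if "i \<in> J" for i
    unfolding r_def J_def[symmetric] using J that by (intro Max_ge) auto
  have "r \<in> jrank P w bs ` J" unfolding r_def J_def[symmetric] using J by (intro Max_in) auto
  then obtain m0 where m0: "m0 \<in> J" "jrank P w bs m0 = r" by auto
  obtain m where m: "m \<in> {1..CARD('n)}" "cmod (jlam bs m) = \<mu>" "jrank P w bs m = r"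
    and unique: "\<And>i. i \<in> {1..CARD('n)} \<Longrightarrow> cmod (jlam bs i) = \<mu> \<Longrightarrow> jrank P w bs i = r \<Longrightarrow> i = m"
    and proj: "\<And>v. Pi_proj P w bs \<mu> r v = bcoord w v m *\<^sub>R w m"
    using dim_Pi_proj_eq_1[OF rjb dim] by blast
  have "m0 = m" using m0 by (intro unique) (auto simp: J_def)
  then have mI: "m \<in> ?I" using m0 by (simp add: J_def)
  have real: "Im (jlam bs m) = 0"
    by (rule unique_index_real_eigenvalue[OF rjb m(1)], rule unique) (simp_all add: m(2,3))
  obtain R where R: "r = Suc R" using jrank_pos[OF rjb m(1)] m(3) by (cases r) auto
  have "jrank P w bs i \<le> R" if i: "i \<in> {1..CARD('n)} - {m}" "cmod (jlam bs i) = \<mu>" for i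
  proof -
    have "jrank P w bs i \<le> r"
    proof (cases "i = CARD('n)")
      case True
      have "w (CARD('n)) v* P = w (CARD('n))" using st wN by (simp add: stationary_dist_def)
      from fixed_last_basis_vector_jrank[OF rjb this] show ?thesis using True R by simp
    next
      case False
      then show ?thesis using i by (intro r_ge) (auto simp: J_def)
    qed
    moreover have "jrank P w bs i \<noteq> r"
    proof
      assume "jrank P w bs i = r"
      then have "i = m" using i by (intro unique) auto
      then show False using i by simp
    qed
    ultimately show ?thesis using R by simp
  qed
  then show ?thesis using that[OF mI real m(2) m(3)[unfolded R] below] proj by blast
qed

lemma norm_on_distance_scaled_tendsto:
  assumes P: "stochastic P" and st: "stationary_dist P \<pi>" and wN: "w (CARD('n)) = \<pi>"
    and H: "norm_on UNIV H"
    and m: "m \<in> {1..<CARD('n)}" and real: "Im (jlam bs m) = 0"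
    and \<mu>: "cmod (jlam bs m) = \<mu>" "0 < \<mu>" and rank: "jrank P w bs m = Suc R"
    and below: "\<And>i. i \<in> {1..<CARD('n)} \<Longrightarrow> cmod (jlam bs i) \<le> \<mu>"
    and lower_rank: "\<And>i. i \<in> {1..CARD('n)} - {m} \<Longrightarrow> cmod (jlam bs i) = \<mu> \<Longrightarrow> jrank P w bs i \<le> R"
  obtains c where "0 < c"
    "\<And>x. (\<Sum>j\<in>UNIV. x $ j) = 1 \<Longrightarrow>
       (\<lambda>n. H (x v* matpow P n - \<pi>) / jordan_growth \<mu> R n) \<longlonglongrightarrow> c * \<bar>bcoord w x m\<bar>"
proof -
  define l where "l = Re (jlam bs m)"
  define v where "v = w m v* matpow (P - mat l) R"
  define a where "a n = real (n choose R) * l ^ (n - R)" for n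
  have mI: "m \<in> {1..CARD('n)}" using m by auto
  have l: "\<bar>l\<bar> = \<mu>" "l \<noteq> 0" using \<mu> real by (auto simp: l_def cmod_def)
  have nil: "w m v* matpow (P - mat l) (Suc R) = 0" and "v \<noteq> 0"
    using jrank_real_eigenvalue[OF rjb mI real] rank by (simp_all add: v_def l_def)
  then have Hv: "0 < H v" using H unfolding norm_on_def by (metis UNIV_I less_eq_real_def)
  have g: "0 \<le> jordan_growth \<mu> R n" for n using \<mu> by (simp add: jordan_growth_nonneg)
  have lead: "smallo_seq (\<lambda>n. w m v* matpow P n - a n *\<^sub>R v) (jordan_growth \<mu> R)"
    using smallo_seq_leading_term[OF nil l(2)] l(1) by (simp add: a_def v_def scalar_mult_eq_scaleR)
  have others: "smallo_seq (\<lambda>n. w i v* matpow P n) (jordan_growth \<mu> R)" if i: "i \<in> {1..<CARD('n)} - {m}" for i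
  proof -
    have "cmod (jlam bs i) < \<mu> \<or> jrank P w bs i \<le> R"
      using below[of i] lower_rank[of i] i by fastforce
    then show ?thesis using i below[of i] by (intro smallo_seq_basis_vector_power[OF rjb _ _ \<mu>(2)]) auto
  qed
  have fixed: "\<pi> v* P = \<pi>" using st by (simp add: stationary_dist_def)
  then have fixedN: "w (CARD('n)) v* P = w (CARD('n))" using wN by simp
  have rank_last: "0 < R" if "\<mu> = 1"
    using lower_rank[of "CARD('n)"] fixed_last_basis_vector_jlam[OF rjb fixedN]
      fixed_last_basis_vector_jrank[OF rjb fixedN] m that by auto
  show ?thesis
  proof (intro that[of "H v"] Hv)
    fix x :: "real^'n" assume x: "(\<Sum>j\<in>UNIV. x $ j) = 1"
    have small: "smallo_seq (\<lambda>n. x v* matpow P n - \<pi> - (bcoord w x m * a n) *\<^sub>R v) (jordan_growth \<mu> R)"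
      using smallo_seq_power_minus_dominant[OF g fixed wN m others lead
          smallo_seq_stationary_defect[OF P st wN x below \<mu>(2) rank_last]] .
    have "\<bar>bcoord w x m * a n\<bar> = \<bar>bcoord w x m\<bar> * jordan_growth \<mu> R n" for n
      using l by (simp add: a_def jordan_growth_def abs_mult power_abs)
    from norm_on_scaled_tendsto[OF H eventually_jordan_growth_pos[OF \<mu>(2)] this small]
    show "(\<lambda>n. H (x v* matpow P n - \<pi>) / jordan_growth \<mu> R n) \<longlonglongrightarrow> H v * \<bar>bcoord w x m\<bar>"
      by (simp add: mult.commute)
  qed
qed

end

theorem corollary2:
  fixes P :: "real^'n^'n" and \<pi> :: "real^'n"
    and w :: "nat \<Rightarrow> real^'n" and bs :: "(complex \<times> nat) list"
    and nrm :: "real^'n \<Rightarrow> real" and \<sigma> :: "nat \<Rightarrow> 'n"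
  defines "N \<equiv> CARD('n)"
  defines "\<mu>0 \<equiv> Max ((\<lambda>i. cmod (jlam bs i)) ` {1..<N})"
  defines "r0 \<equiv> Max (jrank P w bs ` {i \<in> {1..<N}. cmod (jlam bs i) = \<mu>0})"
  defines "q \<equiv> (\<lambda>j::'n. nrm (Pi_proj P w bs \<mu>0 r0 (axis j 1)))"
  assumes "stochastic P" and "irreducible_mc P" and "aperiodic_mc P"
    and "stationary_dist P \<pi>"
    and "real_jordan_basis P w bs" and "w N = \<pi>"
    and "\<mu>0 > 0"
    and "dim (range (Pi_proj P w bs \<mu>0 r0)) = 1"
    and "norm_on (range (Pi_proj P w bs \<mu>0 r0)) nrm"
    and "bij_betw \<sigma> {1..N} (UNIV :: 'n set)"
    and "\<forall>k\<in>{1..<N}. q (\<sigma> k) < q (\<sigma> (Suc k))"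
  shows "\<forall>H. norm_on UNIV H \<longrightarrow>
           (\<exists>n0. \<forall>n>n0. \<forall>k\<in>{1..<N}.
              H (axis (\<sigma> k) 1 v* matpow P n - \<pi>) < H (axis (\<sigma> (Suc k)) 1 v* matpow P n - \<pi>))"
proof (cases "2 \<le> N")
  case two: True
  note P = assms(5) and st = assms(8) and rjb = assms(9) and wN = assms(10)[unfolded N_def]
  obtain m R where m: "m \<in> {1..<N}" "Im (jlam bs m) = 0" "cmod (jlam bs m) = \<mu>0" "jrank P w bs m = Suc R"
    and below: "\<And>i. i \<in> {1..<N} \<Longrightarrow> cmod (jlam bs i) \<le> \<mu>0"
    and lower_rank: "\<And>i. i \<in> {1..N} - {m} \<Longrightarrow> cmod (jlam bs i) = \<mu>0 \<Longrightarrow> jrank P w bs i \<le> R"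
    and proj: "\<And>v. Pi_proj P w bs \<mu>0 r0 v = bcoord w v m *\<^sub>R w m"
    using dominant_index[OF rjb st wN two[unfolded N_def] _ _ assms(12)] unfolding \<mu>0_def r0_def N_def
    by blast
  have "Pi_proj P w bs \<mu>0 r0 (w m) = w m"
    using m(1) by (simp add: proj bcoord_basis_vector[OF rjb] N_def)
  from norm_on_range_rank_one[OF assms(13) proj this real_jordan_basis_nonzero[OF rjb]] m(1)
  have "0 < nrm (w m)" and q: "\<And>j. q j = \<bar>bcoord w (axis j 1) m\<bar> * nrm (w m)"
    unfolding q_def N_def by auto
  then have sorted: "\<forall>k\<in>{1..<N}. \<bar>bcoord w (axis (\<sigma> k) 1) m\<bar> < \<bar>bcoord w (axis (\<sigma> (Suc k)) 1) m\<bar>"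
    using assms(15) by (simp add: mult_less_cancel_right)
  show ?thesis
  proof (intro allI impI)
    fix H :: "real^'n \<Rightarrow> real" assume H: "norm_on UNIV H"
    obtain c where "0 < c" and lim: "\<And>x. (\<Sum>j\<in>UNIV. x $ j) = 1 \<Longrightarrow>
        (\<lambda>n. H (x v* matpow P n - \<pi>) / jordan_growth \<mu>0 R n) \<longlonglongrightarrow> c * \<bar>bcoord w x m\<bar>"
      using norm_on_distance_scaled_tendsto[OF rjb P st wN H m(1)[unfolded N_def] m(2,3) assms(11) m(4)]
        below lower_rank unfolding N_def by blast
    have "(\<lambda>n. H (axis j 1 v* matpow P n - \<pi>) / jordan_growth \<mu>0 R n)
        \<longlonglongrightarrow> c * \<bar>bcoord w (axis j 1) m\<bar>" for j
      by (rule lim) (simp add: axis_def)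
    from eventually_sorted_of_scaled_tendsto[where F = "\<lambda>j n. H (axis j 1 v* matpow P n - \<pi>)"
        and a = "\<lambda>j. \<bar>bcoord w (axis j 1) m\<bar>", OF this \<open>0 < c\<close>
        eventually_jordan_growth_pos[OF assms(11)] sorted]
    show "\<exists>n0. \<forall>n>n0. \<forall>k\<in>{1..<N}.
        H (axis (\<sigma> k) 1 v* matpow P n - \<pi>) < H (axis (\<sigma> (Suc k)) 1 v* matpow P n - \<pi>)"
      by simp
  qed
qed auto

end
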